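(* Let $D$ be a sqrt-bounded degree function and consider a GSAT maintained under get, insert and delete operations with counter-based rebuilding. Not counting the time of searching inside a node, the amortized cost of an insert, delete or get operation is $O(\log m)$; that is, the total cost of the first $m$ operations is $O(m\log m)$.
   Context: A function $f$ is sqrt-bounded if $f(m)\ge 1$ for all $m$ and there is a constant $M^*$ with $f(m)\le\max(\sqrt m,M^* )$ for all $m$. A Generic Self-Adjusting Tree (GSAT) with degree function $D$ for a set of integer keys $X=\{x_1<\dots<x_n\}$ with access counts $ac_i\ge1$ consists of $m=\sum_i ac_i$, an array of $k\le\lceil D(m)\rceil$ representative keys $x_{i_1}<\dots<x_{i_k}$ with their access counts, and $k+1$ child subtrees that are GSATs for the keys strictly before $x_{i_1}$, strictly between consecutive representatives, and strictly after $x_{i_k}$. For a subtree $T'$, $m(T')$ is the total access count of keys in $T'$. A GSAT is ideal if each child $T_j$ of the root satisfies $m(T_j)\le m/(D(m)+1)$ and each child is ideal. Dynamic operations: each node $v$ (root of subtree $T_v$) has a counter $C(v)$ and a value $im(T_v)$ equal to $m(T_v)$ at the time $T_v$ was last (re)built. An operation get/insert/delete on key $x$ walks down from the root along the search path of $x$, increments $C(v)$ for every visited node and increments the access count of $x$ if found; insert of an absent key creates a new node holding $x$ with access count 1 attached as a child of the last visited node; delete only marks the key. Afterwards, among the visited nodes $v$ with $C(v)>im(T_v)/4$, the one $u$ of minimum depth (if any) is chosen and $T_u$ is rebuilt into an ideal GSAT for its unmarked keys with their current access counts, counters set to $0$ and $im$ values reset. Cost of an operation: number of visited nodes plus, if a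 rebuild happens, $O(m(T_u))$ for rebuilding $T_u$. *)

theory Defs
  imports Complex_Main
begin

text \<open>Degree functions are functions from total access counts (naturals) to reals.\<close>

definition sqrt_bounded :: "(nat \<Rightarrow> real) \<Rightarrow> bool" where
  "sqrt_bounded f \<longleftrightarrow> (\<forall>m. f m \<ge> 1) \<and> (\<exists>Mstar. \<forall>m. f m \<le> max (sqrt (real m)) Mstar)"

text \<open>An entry is (key, access count, marked-as-deleted).
  Node es cs C im: representative entries es (sorted by key), children cs
  (length es + 1 of them), counter C(v), and im(T_v).\<close>

type_synonym entry = "int \<times> nat \<times> bool"

datatype gsat = Leaf | Node "entry list" "gsat list" nat nat

datatype op = Get int | Ins int | Del int

fun op_key :: "op \<Rightarrow> int" where
  "op_key (Get x) = x" | "op_key (Ins x) = x" | "op_key (Del x) = x"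

fun mass :: "gsat \<Rightarrow> nat" where
  "mass Leaf = 0"
| "mass (Node es cs c im) = sum_list (map (\<lambda>e. fst (snd e)) es) + sum_list (map mass cs)"

fun entries :: "gsat \<Rightarrow> entry set" where
  "entries Leaf = {}"
| "entries (Node es cs c im) = set es \<union> \<Union> (set (map entries cs))"

fun ideal_gsat :: "(nat \<Rightarrow> real) \<Rightarrow> gsat \<Rightarrow> bool" where
  "ideal_gsat D Leaf = True"
| "ideal_gsat D (Node es cs c im) =
    (let m = mass (Node es cs c im) in
      es \<noteq> [] \<and> real (length es) \<le> of_int \<lceil>D m\<rceil> \<and> length cs = length es + 1
      \<and> sorted_wrt (<) (map fst es)
      \<and> (\<forall>j < length cs. real (mass (cs ! j)) \<le> real m / (D m + 1)
            \<and> (\<forall>e \<in> entries (cs ! j). (0 < j \<longrightarrow> fst (es ! (j - 1)) < fst e)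
                                    \<and> (j < length es \<longrightarrow> fst e < fst (es ! j))))
      \<and> (\<forall>ch \<in> set cs. ideal_gsat D ch))"

fun fresh :: "gsat \<Rightarrow> bool" where
  "fresh Leaf = True"
| "fresh (Node es cs c im) =
    ((\<forall>e \<in> set es. \<not> snd (snd e)) \<and> c = 0 \<and> im = mass (Node es cs c im)
     \<and> (\<forall>ch \<in> set cs. fresh ch))"

fun upd_entry :: "op \<Rightarrow> entry \<Rightarrow> entry" where
  "upd_entry (Get x) (k, a, mk) = (k, Suc a, mk)"
| "upd_entry (Ins x) (k, a, mk) = (k, Suc a, False)"
| "upd_entry (Del x) (k, a, mk) = (k, Suc a, True)"

definition child_index :: "int \<Rightarrow> entry list \<Rightarrow> nat" where
  "child_index x es = length (filter (\<lambda>e. fst e < x) es)"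

definition new_node :: "int \<Rightarrow> gsat" where
  "new_node x = Node [(x, 1, False)] [Leaf, Leaf] 0 1"

text \<open>Access walk (without rebuilding): acc op t t' v means the walk along the
  search path transforms t into t' and visits v nodes.\<close>
inductive acc :: "op \<Rightarrow> gsat \<Rightarrow> gsat \<Rightarrow> nat \<Rightarrow> bool" where
  acc_leaf_ins: "acc (Ins x) Leaf (new_node x) 0"
| acc_leaf_get: "acc (Get x) Leaf Leaf 0"
| acc_leaf_del: "acc (Del x) Leaf Leaf 0"
| acc_found: "\<lbrakk> i < length es; fst (es ! i) = op_key o' \<rbrakk> \<Longrightarrow>
     acc o' (Node es cs c im) (Node (es[i := upd_entry o' (es ! i)]) cs (Suc c) im) 1"
| acc_down: "\<lbrakk> \<forall>e \<in> set es. fst e \<noteq> op_key o'; j = child_index (op_key o') es; j < length cs;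
     acc o' (cs ! j) t' v \<rbrakk> \<Longrightarrow>
     acc o' (Node es cs c im) (Node es (cs[j := t']) (Suc c) im) (Suc v)"

text \<open>One operation with counter-based rebuilding; the last argument is its cost
  (visited nodes plus m(T_u) if T_u is rebuilt).  The first visited node (minimum depth)
  whose counter exceeds im/4 is rebuilt into an arbitrary fresh ideal GSAT of its
  unmarked keys with their current access counts.\<close>
inductive step :: "(nat \<Rightarrow> real) \<Rightarrow> op \<Rightarrow> gsat \<Rightarrow> gsat \<Rightarrow> nat \<Rightarrow> bool" where
  step_leaf: "acc o' Leaf t' 0 \<Longrightarrow> step D o' Leaf t' 0"
| step_rebuild: "\<lbrakk> real (Suc c) > real im / 4; acc o' (Node es cs c im) t2 v;
     ideal_gsat D R; fresh R; entries R = {e \<in> entries t2. \<not> snd (snd e)} \<rbrakk> \<Longrightarrow>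
     step D o' (Node es cs c im) R (v + mass t2)"
| step_found: "\<lbrakk> \<not> real (Suc c) > real im / 4; i < length es; fst (es ! i) = op_key o' \<rbrakk> \<Longrightarrow>
     step D o' (Node es cs c im) (Node (es[i := upd_entry o' (es ! i)]) cs (Suc c) im) 1"
| step_down: "\<lbrakk> \<not> real (Suc c) > real im / 4; \<forall>e \<in> set es. fst e \<noteq> op_key o';
     j = child_index (op_key o') es; j < length cs; step D o' (cs ! j) t' v \<rbrakk> \<Longrightarrow>
     step D o' (Node es cs c im) (Node es (cs[j := t']) (Suc c) im) (Suc v)"

inductive run :: "(nat \<Rightarrow> real) \<Rightarrow> gsat \<Rightarrow> op list \<Rightarrow> gsat \<Rightarrow> nat \<Rightarrow> bool" where
  run_nil: "run D t [] t 0"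
| run_cons: "\<lbrakk> step D o' t t1 c1; run D t1 ops t2 c2 \<rbrakk> \<Longrightarrow> run D t (o' # ops) t2 (c1 + c2)"

end

theory Submission
  imports Defs
begin

text \<open>Amortization by a potential.  Every node keeps the invariant that its counter \<open>c\<close> is at
  most \<open>im/4\<close>, its weight at most \<open>im + c\<close>, and the weight and \<open>im\<close> of each child at most
  \<open>im/2 + c\<close>; so \<open>im\<close> drops by the factor \<open>3/4\<close> from a node to its children and a search path
  has length \<open>O(log m)\<close>.  A rebuild is triggered only when \<open>c + 1 > im/4\<close> and then costs at most
  \<open>im + c + 1 < 5 (c + 1)\<close>; it is paid for by the potential \<open>5\<close> times the sum of all counters,
  which grows by \<open>5\<close> per visited node.  Only \<open>D m \<ge> 1\<close> is used: the bound \<open>D m \<le> sqrt m\<close> is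
  needed only for the search inside nodes, whose time is not counted here.\<close>

abbreviation acount :: "entry \<Rightarrow> nat" where
  "acount e \<equiv> fst (snd e)"

fun im_of :: "gsat \<Rightarrow> nat" where
  "im_of Leaf = 0"
| "im_of (Node es cs c im) = im"

fun counter_sum :: "gsat \<Rightarrow> nat" where
  "counter_sum Leaf = 0"
| "counter_sum (Node es cs c im) = c + sum_list (map counter_sum cs)"

(* Ensures that every rebuilt node gets im \<ge> 1. *)
fun counts_pos :: "gsat \<Rightarrow> bool" where
  "counts_pos Leaf = True"
| "counts_pos (Node es cs c im) = ((\<forall>e\<in>set es. 1 \<le> acount e) \<and> (\<forall>ch\<in>set cs. counts_pos ch))"

fun balanced :: "gsat \<Rightarrow> bool" where
  "balanced Leaf = True"
| "balanced (Node es cs c im) =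
    (4 * c \<le> im \<and> 1 \<le> im \<and> mass (Node es cs c im) \<le> im + c \<and>
     (\<forall>ch\<in>set cs. 2 * mass ch \<le> im + 2 * c \<and> 2 * im_of ch \<le> im + 2 * c \<and> balanced ch))"

fun depth_bound :: "gsat \<Rightarrow> real" where
  "depth_bound Leaf = 0"
| "depth_bound (Node es cs c im) = 1 + log (4/3) (real im)"

subsection \<open>Sums over entries and children\<close>

lemma sum_list_map_update:
  "i < length xs \<Longrightarrow>
    sum_list (map f (xs[i := x])) + f (xs ! i) = sum_list (map f xs) + (f x :: 'b::comm_monoid_add)"
  by (induction xs arbitrary: i) (auto simp: algebra_simps split: nat.splits)

lemma sum_Union_le_sum_list:
  fixes f :: "'a \<Rightarrow> nat"
  assumes "\<forall>A\<in>set As. finite A"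
  shows "sum f (\<Union>(set As)) \<le> sum_list (map (sum f) As)"
  using assms
proof (induction As)
  case (Cons A As)
  have "sum f (A \<union> \<Union>(set As)) + sum f (A \<inter> \<Union>(set As)) = sum f A + sum f (\<Union>(set As))"
    by (rule sum.union_inter) (use Cons.prems in auto)
  then show ?case
    using Cons by simp
qed simp

lemma sum_set_le_sum_list:
  fixes f :: "'a \<Rightarrow> nat"
  shows "sum f (set xs) \<le> sum_list (map f xs)"
  by (induction xs) (auto simp: sum.insert_if)

lemma acount_upd_entry [simp]: "acount (upd_entry o' e) = Suc (acount e)"
  by (cases o'; cases e) auto

lemma mass_update_entry:
  "i < length es \<Longrightarrow>
    mass (Node (es[i := upd_entry o' (es ! i)]) cs c' im') = Suc (mass (Node es cs c im))"
  using sum_list_map_update[of i es acount "upd_entry o' (es ! i)"] by simp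

lemma mass_update_child:
  "j < length cs \<Longrightarrow>
    mass (Node es (cs[j := t']) c' im') + mass (cs ! j) = mass (Node es cs c im) + mass t'"
  using sum_list_map_update[of j cs mass t'] by simp

lemma counter_sum_update_child:
  "j < length cs \<Longrightarrow>
    counter_sum (Node es (cs[j := t']) (Suc c) im) + counter_sum (cs ! j)
      = Suc (counter_sum (Node es cs c im)) + counter_sum t'"
  using sum_list_map_update[of j cs counter_sum t'] by simp

lemma finite_entries: "finite (entries t)"
  by (induction t) auto

lemma sum_entries_le_mass: "sum acount (entries t) \<le> mass t"
proof (induction t)
  case (Node es cs c im)
  have "sum acount (entries (Node es cs c im))
      \<le> sum acount (set es) + sum acount (\<Union>(set (map entries cs)))"
    using sum.union_inter[of "set es" "\<Union>(set (map entries cs))" acount] finite_entries by auto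
  also have "sum acount (\<Union>(set (map entries cs))) \<le> sum_list (map (sum acount) (map entries cs))"
    by (rule sum_Union_le_sum_list) (auto simp: finite_entries)
  also have "\<dots> \<le> sum_list (map mass cs)"
    using Node by (auto intro: sum_list_mono)
  also have "sum acount (set es) \<le> sum_list (map acount es)"
    by (rule sum_set_le_sum_list)
  finally show ?case by simp
qed simp

subsection \<open>Ideal trees\<close>

lemma ideal_child_keys:
  assumes "ideal_gsat D (Node es cs c im)" "j < length cs" "e \<in> entries (cs ! j)"
  shows ideal_child_keys_above: "0 < j \<Longrightarrow> fst (es ! (j - 1)) < fst e"
    and ideal_child_keys_below: "j < length es \<Longrightarrow> fst e < fst (es ! j)"
  using assms by (auto simp: Let_def)

lemma sorted_wrt_less_nth_le:
  "sorted_wrt (<) (map fst es) \<Longrightarrow> i \<le> k \<Longrightarrow> k < length es \<Longrightarrow> fst (es ! i) \<le> (fst (es ! k) :: 'a::order)"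
  using sorted_wrt_nth_less[of "(<)" "map fst es" i k] by (cases "i = k") auto

lemma ideal_children_disjoint:
  assumes ideal: "ideal_gsat D (Node es cs c im)" and "j < k" "k < length cs"
  shows "entries (cs ! j) \<inter> entries (cs ! k) = {}"
proof -
  have sorted: "sorted_wrt (<) (map fst es)" and len: "length cs = length es + 1"
    using ideal by (simp_all add: Let_def)
  have "fst e < fst e'" if "e \<in> entries (cs ! j)" "e' \<in> entries (cs ! k)" for e e'
  proof -
    have "fst e < fst (es ! j)"
      using ideal_child_keys_below[OF ideal _ that(1)] assms len by simp
    also have "\<dots> \<le> fst (es ! (k - 1))"
      using sorted_wrt_less_nth_le[OF sorted, of j "k - 1"] assms len by simp
    also have "\<dots> < fst e'"
      using ideal_child_keys_above[OF ideal _ that(2)] assms by simp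
    finally show ?thesis .
  qed
  then show ?thesis by blast
qed

lemma ideal_entries_children_disjoint:
  assumes ideal: "ideal_gsat D (Node es cs c im)" and "j < length cs"
  shows "set es \<inter> entries (cs ! j) = {}"
proof -
  have sorted: "sorted_wrt (<) (map fst es)" and len: "length cs = length es + 1"
    using ideal by (simp_all add: Let_def)
  have "fst (es ! i) \<noteq> fst e" if "i < length es" "e \<in> entries (cs ! j)" for i e
  proof (cases "i < j")
    case True
    have "fst (es ! i) \<le> fst (es ! (j - 1))"
      using sorted_wrt_less_nth_le[OF sorted, of i "j - 1"] True assms len by simp
    also have "\<dots> < fst e"
      using ideal_child_keys_above[OF ideal assms(2) that(2)] True by simp
    finally show ?thesis by simp
  next
    case False
    have "fst e < fst (es ! j)"
      using ideal_child_keys_below[OF ideal assms(2) that(2)] False that(1) by simp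
    also have "\<dots> \<le> fst (es ! i)"
      using sorted_wrt_less_nth_le[OF sorted, of j i] False that(1) by simp
    finally show ?thesis by simp
  qed
  then show ?thesis by (force simp: in_set_conv_nth)
qed

lemma ideal_mass_eq: "ideal_gsat D t \<Longrightarrow> mass t = sum acount (entries t)"
proof (induction t)
  case (Node es cs c im)
  have children: "\<Union>(set (map entries cs)) = (\<Union>j<length cs. entries (cs ! j))"
    by (auto simp: in_set_conv_nth) (metis nth_mem)
  have "sum_list (map mass cs) = (\<Sum>j<length cs. mass (cs ! j))"
    by (simp add: sum_list_sum_nth atLeast0LessThan)
  also have "\<dots> = (\<Sum>j<length cs. sum acount (entries (cs ! j)))"
  proof (rule sum.cong[OF refl])
    fix j assume "j \<in> {..<length cs}"
    then have "cs ! j \<in> set cs" by simp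
    with Node.prems have "ideal_gsat D (cs ! j)" by (simp add: Let_def)
    with \<open>cs ! j \<in> set cs\<close> show "mass (cs ! j) = sum acount (entries (cs ! j))" by (rule Node.IH)
  qed
  also have "\<dots> = sum acount (\<Union>(set (map entries cs)))"
  proof -
    have "\<forall>i\<in>{..<length cs}. \<forall>k\<in>{..<length cs}. i \<noteq> k \<longrightarrow> entries (cs ! i) \<inter> entries (cs ! k) = {}"
      using ideal_children_disjoint[OF Node.prems] by (metis Int_commute lessThan_iff linorder_neqE_nat)
    then show ?thesis
      unfolding children by (intro sum.UNION_disjoint[symmetric]) (simp_all add: finite_entries)
  qed
  finally have children_mass: "sum_list (map mass cs) = sum acount (\<Union>(set (map entries cs)))" .
  have entries_mass: "sum_list (map acount es) = sum acount (set es)"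
  proof -
    have "sorted_wrt (<) (map fst es)"
      using Node.prems by (simp add: Let_def)
    then have "distinct es"
      by (metis distinct_map strict_sorted_iff)
    then show ?thesis
      by (rule sum_list_distinct_conv_sum_set)
  qed
  have "set es \<inter> \<Union>(set (map entries cs)) = {}"
    using ideal_entries_children_disjoint[OF Node.prems] children by auto
  then have "sum acount (entries (Node es cs c im))
      = sum acount (set es) + sum acount (\<Union>(set (map entries cs)))"
    unfolding entries.simps by (intro sum.union_disjoint) (simp_all add: finite_entries)
  then show ?case
    by (simp only: mass.simps children_mass entries_mass)
qed simp

lemma ideal_child_mass:
  assumes "ideal_gsat D (Node es cs c im)" "\<forall>m. 1 \<le> D m" "ch \<in> set cs"
  shows "2 * mass ch \<le> mass (Node es cs c im)"
proof -
  let ?m = "mass (Node es cs c im)"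
  obtain j where j: "j < length cs" "ch = cs ! j"
    using assms(3) by (auto simp: in_set_conv_nth)
  have "real (mass ch) \<le> real ?m / (D ?m + 1)"
    using assms(1) j by (simp add: Let_def)
  also have "\<dots> \<le> real ?m / 2"
    using assms(2)[rule_format, of ?m] by (intro divide_left_mono) auto
  finally show ?thesis by linarith
qed

subsection \<open>Freshly built trees\<close>

lemma counts_pos_iff: "counts_pos t \<longleftrightarrow> (\<forall>e\<in>entries t. 1 \<le> acount e)"
  by (induction t) auto

lemma counts_pos_update_entry:
  "counts_pos (Node es cs c im) \<Longrightarrow> counts_pos (Node (es[i := upd_entry o' (es ! i)]) cs c' im')"
  using set_update_subset_insert[of es i "upd_entry o' (es ! i)"] by auto

lemma counts_pos_update_child:
  "counts_pos (Node es cs c im) \<Longrightarrow> counts_pos t' \<Longrightarrow> counts_pos (Node es (cs[j := t']) c' im')"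
  using set_update_subset_insert[of cs j t'] by auto

lemma counts_pos_mass_pos: "counts_pos (Node es cs c im) \<Longrightarrow> es \<noteq> [] \<Longrightarrow> 1 \<le> mass (Node es cs c im)"
  by (cases es) auto

lemma fresh_counter_sum: "fresh t \<Longrightarrow> counter_sum t = 0"
  by (induction t) (simp_all add: sum_list_eq_0_iff)

lemma fresh_im_of: "fresh t \<Longrightarrow> im_of t = mass t"
  by (cases t) auto

lemma ideal_fresh_balanced:
  assumes D: "\<forall>m. 1 \<le> D m"
  shows "ideal_gsat D t \<Longrightarrow> fresh t \<Longrightarrow> counts_pos t \<Longrightarrow> balanced t"
proof (induction t)
  case (Node es cs c im)
  have nonempty: "es \<noteq> []" and ideal_children: "\<forall>ch\<in>set cs. ideal_gsat D ch"
    using Node.prems(1) unfolding ideal_gsat.simps Let_def by blast+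
  have c: "c = 0" and im: "im = mass (Node es cs c im)" and fresh_children: "\<forall>ch\<in>set cs. fresh ch"
    using Node.prems(2) unfolding fresh.simps by blast+
  have "1 \<le> im"
    using counts_pos_mass_pos[OF Node.prems(3) nonempty] im by simp
  moreover have "2 * mass ch \<le> im \<and> 2 * im_of ch \<le> im \<and> balanced ch" if "ch \<in> set cs" for ch
    using ideal_child_mass[OF Node.prems(1) D that] im fresh_im_of Node.IH[OF that] Node.prems(3)
      ideal_children fresh_children that by simp
  ultimately show ?case
    using c im by simp
qed simp

subsection \<open>Search paths\<close>

lemma acc_LeafD: "acc o' Leaf t' v \<Longrightarrow> v = 0 \<and> (t' = Leaf \<or> (\<exists>x. t' = new_node x))"
  by (cases rule: acc.cases) auto

lemma acc_mass_le: "acc o' t t' v \<Longrightarrow> mass t' \<le> mass t + 1"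
proof (induction rule: acc.induct)
  case (acc_down es o' j cs t' v c im)
  then show ?case
    using mass_update_child[of j cs es t' "Suc c" im c im] by simp
next
  case (acc_found i es o' cs c im)
  then show ?case
    using mass_update_entry[of i es o' cs "Suc c" im c im] by simp
qed (simp_all add: new_node_def)

lemma acc_counts_pos: "acc o' t t' v \<Longrightarrow> counts_pos t \<Longrightarrow> counts_pos t'"
proof (induction rule: acc.induct)
  case (acc_found i es o' cs c im)
  show ?case using acc_found.prems by (rule counts_pos_update_entry)
next
  case (acc_down es o' j cs t' v c im)
  then have "counts_pos t'" by simp
  with acc_down.prems show ?case by (rule counts_pos_update_child)
qed (simp_all add: new_node_def)

lemma depth_bound_child:
  assumes "balanced (Node es cs c im)" "ch \<in> set cs"
  shows "1 + depth_bound ch \<le> depth_bound (Node es cs c im)"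
proof (cases ch)
  case (Node es' cs' c' im')
  have "1 \<le> im'" "2 * im' \<le> im + 2 * c" "4 * c \<le> im"
    using assms Node by auto
  then have pos: "1 \<le> real im'" and shrink: "4/3 * real im' \<le> real im"
    by linarith+
  have "1 + log (4/3) (real im') = log (4/3) (4/3 * real im')"
    using pos by (subst log_mult_pos) auto
  also have "\<dots> \<le> log (4/3) (real im)"
    using pos shrink by simp
  finally show ?thesis
    using Node by simp
qed (use assms in simp)

lemma depth_bound_ge_1: "balanced (Node es cs c im) \<Longrightarrow> 1 \<le> depth_bound (Node es cs c im)"
  by simp

lemma acc_visits_le_depth_bound: "acc o' t t' v \<Longrightarrow> balanced t \<Longrightarrow> real v \<le> depth_bound t"
proof (induction rule: acc.induct)
  case (acc_found i es o' cs c im)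
  then show ?case using depth_bound_ge_1 by simp
next
  case (acc_down es o' j cs t' v c im)
  then have "cs ! j \<in> set cs" by simp
  with acc_down show ?case
    using depth_bound_child[OF acc_down.prems] by fastforce
qed auto

lemma depth_bound_le:
  assumes "balanced t" "im_of t \<le> N" "1 \<le> N"
  shows "depth_bound t \<le> 1 + log (4/3) (real N)"
proof (cases t)
  case (Node es cs c im)
  then show ?thesis using assms by simp
qed (use assms in simp)

subsection \<open>Operations with rebuilding\<close>

lemma rebuild_iff: "real (Suc c) > real im / 4 \<longleftrightarrow> im < 4 * Suc c"
proof -
  have "real (Suc c) > real im / 4 \<longleftrightarrow> real im < real (4 * Suc c)"
    by (simp add: field_simps)
  then show ?thesis
    by (simp only: of_nat_less_iff)
qed

lemma rebuild_mass_le: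
  assumes "ideal_gsat D R" "entries R = {e \<in> entries t. \<not> snd (snd e)}"
  shows "mass R \<le> mass t"
proof -
  have "mass R = sum acount (entries R)"
    using assms(1) by (rule ideal_mass_eq)
  also have "\<dots> \<le> sum acount (entries t)"
    using assms(2) finite_entries by (intro sum_mono2) auto
  also have "\<dots> \<le> mass t"
    by (rule sum_entries_le_mass)
  finally show ?thesis .
qed

lemma step_mass_le: "step D o' t t' v \<Longrightarrow> mass t' \<le> mass t + 1"
proof (induction rule: step.induct)
  case (step_leaf o' t' D)
  then show ?case using acc_LeafD[OF step_leaf] by (auto simp: new_node_def)
next
  case (step_rebuild c im o' es cs t2 v D R)
  then show ?case
    using rebuild_mass_le[OF step_rebuild(3,5)] acc_mass_le[OF step_rebuild(2)] by linarith
next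
  case (step_found c im i es o' D cs)
  then show ?case
    using mass_update_entry[of i es o' cs "Suc c" im c im] by simp
next
  case (step_down c im es o' j cs D t' v)
  then show ?case
    using mass_update_child[of j cs es t' "Suc c" im c im] by simp
qed

lemma step_im_of_le: "step D o' t t' v \<Longrightarrow> im_of t' \<le> max (im_of t) (mass t + 1)"
proof (induction rule: step.induct)
  case (step_leaf o' t' D)
  then show ?case using acc_LeafD[OF step_leaf] by (auto simp: new_node_def)
next
  case (step_rebuild c im o' es cs t2 v D R)
  then show ?case
    using fresh_im_of[OF step_rebuild(4)] rebuild_mass_le[OF step_rebuild(3,5)]
      acc_mass_le[OF step_rebuild(2)] by simp
qed simp_all

lemma step_counts_pos: "step D o' t t' v \<Longrightarrow> counts_pos t \<Longrightarrow> counts_pos t'"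
proof (induction rule: step.induct)
  case (step_leaf o' t' D)
  then show ?case using acc_LeafD[OF step_leaf(1)] by (auto simp: new_node_def)
next
  case (step_rebuild c im o' es cs t2 v D R)
  then show ?case using acc_counts_pos counts_pos_iff by blast
next
  case (step_found c im i es o' D cs)
  show ?case using step_found.prems by (rule counts_pos_update_entry)
next
  case (step_down c im es o' j cs D t' v)
  then have "counts_pos t'" by simp
  with step_down.prems show ?case by (rule counts_pos_update_child)
qed

lemma balanced_tick:
  assumes "balanced (Node es cs c im)" "4 * Suc c \<le> im"
    and "mass (Node es' cs' (Suc c) im) \<le> mass (Node es cs c im) + 1"
    and "\<forall>ch\<in>set cs'. ch \<in> set cs \<or>
           (2 * mass ch \<le> im + 2 * Suc c \<and> 2 * im_of ch \<le> im + 2 * Suc c \<and> balanced ch)"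
  shows "balanced (Node es' cs' (Suc c) im)"
proof -
  have old: "1 \<le> im" "mass (Node es cs c im) \<le> im + c"
    "\<forall>ch\<in>set cs. 2 * mass ch \<le> im + 2 * c \<and> 2 * im_of ch \<le> im + 2 * c \<and> balanced ch"
    using assms(1) unfolding balanced.simps by blast+
  show ?thesis
    unfolding balanced.simps
  proof (intro conjI)
    show "mass (Node es' cs' (Suc c) im) \<le> im + Suc c"
      using old(2) assms(3) by linarith
    show "\<forall>ch\<in>set cs'. 2 * mass ch \<le> im + 2 * Suc c \<and> 2 * im_of ch \<le> im + 2 * Suc c \<and> balanced ch"
      using old(3) assms(4) by fastforce
  qed (use old(1) assms(2) in auto)
qed

lemma step_balanced:
  "step D o' t t' v \<Longrightarrow> \<forall>m. 1 \<le> D m \<Longrightarrow> balanced t \<Longrightarrow> counts_pos t \<Longrightarrow> balanced t'"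
proof (induction rule: step.induct)
  case (step_leaf o' t' D)
  then show ?case using acc_LeafD[OF step_leaf(1)] by (auto simp: new_node_def)
next
  case (step_rebuild c im o' es cs t2 v D R)
  then have "counts_pos R" using acc_counts_pos counts_pos_iff by blast
  with step_rebuild show ?case using ideal_fresh_balanced by blast
next
  case (step_found c im i es o' D cs)
  show ?case
    using step_found.prems(2)
  proof (rule balanced_tick)
    show "4 * Suc c \<le> im" using step_found(1) unfolding rebuild_iff by simp
    show "mass (Node (es[i := upd_entry o' (es ! i)]) cs (Suc c) im) \<le> mass (Node es cs c im) + 1"
      using mass_update_entry[of i es o' cs "Suc c" im c im] step_found(2) by simp
  qed simp
next
  case (step_down c im es o' j cs D t' v)
  have "cs ! j \<in> set cs" using step_down by simp
  then have old: "2 * mass (cs ! j) \<le> im + 2 * c" "2 * im_of (cs ! j) \<le> im + 2 * c"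
      "balanced (cs ! j)" "counts_pos (cs ! j)"
    using step_down.prems(2,3) by auto
  then have "balanced t'" using step_down.IH step_down.prems(1) by blast
  moreover have "mass t' \<le> mass (cs ! j) + 1" "im_of t' \<le> max (im_of (cs ! j)) (mass (cs ! j) + 1)"
    using step_mass_le[OF step_down(5)] step_im_of_le[OF step_down(5)] by auto
  ultimately have new_child: "2 * mass t' \<le> im + 2 * Suc c \<and> 2 * im_of t' \<le> im + 2 * Suc c \<and> balanced t'"
    using old by auto
  show ?case
    using step_down.prems(2)
  proof (rule balanced_tick)
    show "4 * Suc c \<le> im" using step_down(1) unfolding rebuild_iff by simp
    show "mass (Node es (cs[j := t']) (Suc c) im) \<le> mass (Node es cs c im) + 1"
      using mass_update_child[of j cs es t' "Suc c" im c im] step_down(4) \<open>mass t' \<le> mass (cs ! j) + 1\<close>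
      by simp
    show "\<forall>ch\<in>set (cs[j := t']). ch \<in> set cs \<or>
           (2 * mass ch \<le> im + 2 * Suc c \<and> 2 * im_of ch \<le> im + 2 * Suc c \<and> balanced ch)"
      using set_update_subset_insert[of cs j t'] new_child by auto
  qed
qed

subsection \<open>Amortized cost\<close>

lemma step_amortized_cost:
  "step D o' t t' v \<Longrightarrow> balanced t \<Longrightarrow>
    real v + 5 * real (counter_sum t') \<le> 5 * real (counter_sum t) + 6 * depth_bound t"
proof (induction rule: step.induct)
  case (step_leaf o' t' D)
  then show ?case using acc_LeafD[OF step_leaf(1)] by (auto simp: new_node_def)
next
  case (step_rebuild c im o' es cs t2 v D R)
  have visits: "real v \<le> depth_bound (Node es cs c im)"
    using acc_visits_le_depth_bound step_rebuild by blast
  have depth: "1 \<le> depth_bound (Node es cs c im)"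
    using depth_bound_ge_1 step_rebuild.prems by blast
  have "mass t2 \<le> mass (Node es cs c im) + 1"
    using acc_mass_le step_rebuild by blast
  moreover have "mass (Node es cs c im) \<le> im + c"
    using step_rebuild.prems by (simp only: balanced.simps)
  moreover have "im < 4 * Suc c"
    using step_rebuild(1) unfolding rebuild_iff .
  ultimately have "mass t2 \<le> 5 * counter_sum (Node es cs c im) + 4"
    by simp
  then show ?case
    using fresh_counter_sum[OF step_rebuild(4)] visits depth by simp
next
  case (step_found c im i es o' D cs)
  then show ?case using depth_bound_ge_1 by simp
next
  case (step_down c im es o' j cs D t' v)
  have "cs ! j \<in> set cs" using step_down by simp
  then have "real v + 5 * real (counter_sum t') \<le> 5 * real (counter_sum (cs ! j)) + 6 * depth_bound (cs ! j)"
    using step_down.IH step_down.prems by auto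
  moreover have "1 + depth_bound (cs ! j) \<le> depth_bound (Node es cs c im)"
    using depth_bound_child step_down.prems \<open>cs ! j \<in> set cs\<close> by blast
  moreover have "real (counter_sum (Node es (cs[j := t']) (Suc c) im)) + real (counter_sum (cs ! j))
      = real (counter_sum (Node es cs c im)) + 1 + real (counter_sum t')"
    using counter_sum_update_child[of j cs es t' c im] step_down(4) by (simp only: of_nat_add[symmetric])
  ultimately show ?case by simp
qed

lemma run_amortized_cost:
  "run D t ops t2 cost \<Longrightarrow> \<forall>m. 1 \<le> D m \<Longrightarrow> balanced t \<Longrightarrow> counts_pos t \<Longrightarrow>
    mass t \<le> k \<Longrightarrow> im_of t \<le> k \<Longrightarrow> k + length ops \<le> N \<Longrightarrow>
    real cost + 5 * real (counter_sum t2)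
      \<le> 5 * real (counter_sum t) + 6 * real (length ops) * (1 + log (4/3) (real N))"
proof (induction arbitrary: k rule: run.induct)
  case (run_cons D o' t t1 c1 ops t2 c2)
  have "real c1 + 5 * real (counter_sum t1) \<le> 5 * real (counter_sum t) + 6 * depth_bound t"
    using step_amortized_cost run_cons by blast
  moreover have "depth_bound t \<le> 1 + log (4/3) (real N)"
    using depth_bound_le run_cons.prems by simp
  moreover have "real c2 + 5 * real (counter_sum t2)
      \<le> 5 * real (counter_sum t1) + 6 * real (length ops) * (1 + log (4/3) (real N))"
  proof (rule run_cons.IH)
    show "balanced t1" "counts_pos t1"
      using step_balanced step_counts_pos run_cons by blast+
    show "mass t1 \<le> k + 1" "im_of t1 \<le> k + 1"
      using step_mass_le[OF run_cons(1)] step_im_of_le[OF run_cons(1)] run_cons.prems by auto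
  qed (use run_cons.prems in auto)
  ultimately show ?case
    by (simp add: algebra_simps)
qed simp

lemma one_plus_log_le_ln:
  assumes "2 \<le> x"
  shows "1 + log (4/3) x \<le> (1 / ln 2 + 1 / ln (4/3)) * ln x"
proof -
  have "ln 2 \<le> ln x"
    using assms by simp
  then have "1 \<le> ln x / ln 2"
    by simp
  then show ?thesis
    by (simp add: log_def algebra_simps)
qed

theorem lemma2:
  fixes D :: "nat \<Rightarrow> real"
  assumes "sqrt_bounded D"
  shows "\<exists>C::real. \<forall>ops t cost. 2 \<le> length ops \<longrightarrow> run D Leaf ops t cost \<longrightarrow>
           real cost \<le> C * real (length ops) * ln (real (length ops))"
proof (intro exI allI impI)
  fix ops t cost
  assume "2 \<le> length ops" and run: "run D Leaf ops t cost"
  let ?n = "real (length ops)"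
  have "\<forall>m. 1 \<le> D m"
    using assms unfolding sqrt_bounded_def by blast
  then have "real cost \<le> 6 * ?n * (1 + log (4/3) ?n)"
    using run_amortized_cost[OF run, of 0 "length ops"] by simp
  also have "\<dots> \<le> 6 * ?n * ((1 / ln 2 + 1 / ln (4/3)) * ln ?n)"
    using one_plus_log_le_ln[of ?n] \<open>2 \<le> length ops\<close> by (intro mult_left_mono) auto
  finally show "real cost \<le> 6 * (1 / ln 2 + 1 / ln (4/3)) * ?n * ln ?n"
    by (simp add: algebra_simps)
qed

end
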